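(* Let $P$ be a Poisson tensor on $\mathbb{R}^3$, let $H\in C^\infty(\mathbb{R}^3)$, let $S\in C^\infty(\mathbb{R}^3)$ satisfy $PdS=0$, and let $g$ be the symmetric tensor with components $g^{ij}=H^iH^j-\delta^{ij}\sum_k H^kH^k$. Let $\xi=PdH+gdS$ and $\xi_P=PdH$. Then for $x\in\mathbb{R}^3$, $\xi(x)=\xi_P(x)$ if and only if either $d_xH=0$, or $x$ is a critical point of the restriction of $S$ to the level surface $\{H=H(x)\}$.
   Context: $\mathbb{R}^3$ carries the standard Euclidean metric, used to identify tangent and cotangent spaces with $\mathbb{R}^3$; $H^i=H_i=\partial H/\partial x^i$. A Poisson tensor is a skew-symmetric bivector field satisfying the Jacobi identity. *)

theory Defs
  imports "HOL-Analysis.Analysis"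
begin

definition partial :: "(real^3 \<Rightarrow> real) \<Rightarrow> 3 \<Rightarrow> real^3 \<Rightarrow> real" where
  "partial f i x = frechet_derivative f (at x) (axis i 1)"

fun Ck :: "nat \<Rightarrow> (real^3 \<Rightarrow> real) \<Rightarrow> bool" where
  "Ck 0 f = continuous_on UNIV f"
| "Ck (Suc k) f = (continuous_on UNIV f \<and> (\<forall>x. f differentiable (at x)) \<and> (\<forall>i. Ck k (partial f i)))"

definition smooth :: "(real^3 \<Rightarrow> real) \<Rightarrow> bool" where
  "smooth f = (\<forall>k. Ck k f)"

text \<open>Gradient (= differential under the Euclidean identification).\<close>
definition grad :: "(real^3 \<Rightarrow> real) \<Rightarrow> real^3 \<Rightarrow> real^3" where
  "grad f x = (\<chi> i. partial f i x)"

definition poisson_tensor :: "(real^3 \<Rightarrow> real^3^3) \<Rightarrow> bool" where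
  "poisson_tensor P \<longleftrightarrow>
     (\<forall>i j. smooth (\<lambda>x. P x $ i $ j)) \<and>
     (\<forall>x i j. P x $ i $ j = - P x $ j $ i) \<and>
     (\<forall>x i j k.
        (\<Sum>l\<in>UNIV. P x $ i $ l * partial (\<lambda>y. P y $ j $ k) l x
                  + P x $ j $ l * partial (\<lambda>y. P y $ k $ i) l x
                  + P x $ k $ l * partial (\<lambda>y. P y $ i $ j) l x) = 0)"

definition gtensor :: "(real^3 \<Rightarrow> real) \<Rightarrow> real^3 \<Rightarrow> real^3^3" where
  "gtensor H x = (\<chi> i j. grad H x $ i * grad H x $ j
                        - (if i = j then 1 else 0) * (\<Sum>k\<in>UNIV. grad H x $ k * grad H x $ k))"

definition crit_on_level :: "(real^3 \<Rightarrow> real) \<Rightarrow> (real^3 \<Rightarrow> real) \<Rightarrow> real^3 \<Rightarrow> bool" where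
  "crit_on_level S H x \<longleftrightarrow>
     (\<forall>\<gamma> v. \<gamma> 0 = x \<and> (\<forall>t. H (\<gamma> t) = H x) \<and> (\<gamma> has_vector_derivative v) (at 0)
        \<longrightarrow> ((S \<circ> \<gamma>) has_real_derivative 0) (at 0))"

end

theory Submission
  imports Defs
begin

text \<open>Writing \<open>n = dH\<close> and
  \<open>w = dS\<close>, one has \<open>g w = (n\<bullet>w) n - (n\<bullet>n) w\<close>, which for \<open>n \<noteq> 0\<close> vanishes iff \<open>w\<close>
  annihilates \<open>n\<^sup>\<bottom>\<close>.  It remains to see that \<open>n\<^sup>\<bottom>\<close> is exactly the set of velocities at \<open>x\<close>
  of curves in the level set \<open>{H = H x}\<close>.  This weak implicit function theorem needs only
  continuity of \<open>H\<close> and differentiability at \<open>x\<close>: for \<open>v \<bottom> n\<close> and small \<open>t\<close>, the function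
  \<open>s \<mapsto> H (x + t v + s n) - H x\<close> changes sign on \<open>|s| \<le> \<epsilon> |t|\<close>, so its root \<open>\<sigma> t\<close> of
  least modulus is \<open>o(t)\<close> and \<open>t \<mapsto> x + t v + \<sigma> t n\<close> is the required curve.\<close>

lemma smooth_imp_continuous_on: "smooth f \<Longrightarrow> continuous_on UNIV f"
  unfolding smooth_def by (metis Ck.simps(1))

lemma smooth_imp_differentiable: "smooth f \<Longrightarrow> f differentiable (at y)"
  unfolding smooth_def by (metis Ck.simps(2))

lemma linear_vec_eq_inner_axis:
  fixes f :: "real^'n \<Rightarrow> real"
  assumes "linear f"
  shows "f h = (\<chi> i. f (axis i 1)) \<bullet> h"
proof -
  have "f h = f (\<Sum>i\<in>UNIV. (h$i) *s axis i 1)" by (simp add: basis_expansion)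
  also have "\<dots> = (\<Sum>i\<in>UNIV. h$i * f (axis i 1))"
    using assms by (simp add: linear_sum linear_scale scalar_mult_eq_scaleR)
  also have "\<dots> = (\<chi> i. f (axis i 1)) \<bullet> h" by (simp add: inner_vec_def mult.commute)
  finally show ?thesis .
qed

lemma has_derivative_grad:
  assumes "f differentiable (at y)"
  shows "(f has_derivative (\<lambda>h. grad f y \<bullet> h)) (at y)"
proof -
  have D: "(f has_derivative frechet_derivative f (at y)) (at y)"
    using assms frechet_derivative_works by blast
  have "frechet_derivative f (at y) h = grad f y \<bullet> h" for h
    by (subst linear_vec_eq_inner_axis[OF has_derivative_linear[OF D]])
      (simp add: grad_def partial_def)
  then have "frechet_derivative f (at y) = (\<lambda>h. grad f y \<bullet> h)" by blast
  with D show ?thesis by simp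
qed

lemma gtensor_mult_vec:
  "gtensor H x *v w = (grad H x \<bullet> w) *\<^sub>R grad H x - (grad H x \<bullet> grad H x) *\<^sub>R w"
proof -
  define n where "n = grad H x"
  have "(gtensor H x *v w) $ i =
      (\<Sum>j\<in>UNIV. n$i * n$j * w$j - (if i = j then (n \<bullet> n) * w$j else 0))" for i
    unfolding gtensor_def matrix_vector_mult_def n_def[symmetric]
    by (simp, intro sum.cong refl) (simp add: inner_vec_def left_diff_distrib)
  also have "\<dots> i = n$i * (\<Sum>j\<in>UNIV. n$j * w$j) - (n \<bullet> n) * w$i" for i
    by (simp add: sum_subtractf sum_distrib_left mult.assoc)
  finally show ?thesis
    by (simp add: vec_eq_iff n_def[symmetric] inner_vec_def mult.commute)
qed

lemma parallel_iff_orthogonal_complement: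
  fixes n w :: "'a::real_inner"
  assumes "n \<noteq> 0"
  shows "(n \<bullet> w) *\<^sub>R n = (n \<bullet> n) *\<^sub>R w \<longleftrightarrow> (\<forall>v. n \<bullet> v = 0 \<longrightarrow> w \<bullet> v = 0)"
proof
  assume par: "(n \<bullet> w) *\<^sub>R n = (n \<bullet> n) *\<^sub>R w"
  show "\<forall>v. n \<bullet> v = 0 \<longrightarrow> w \<bullet> v = 0"
  proof (intro allI impI)
    fix v assume "n \<bullet> v = 0"
    then have "(n \<bullet> n) * (w \<bullet> v) = 0"
      using arg_cong[OF par, of "\<lambda>u. u \<bullet> v"] by simp
    then show "w \<bullet> v = 0" using assms by simp
  qed
next
  assume orth: "\<forall>v. n \<bullet> v = 0 \<longrightarrow> w \<bullet> v = 0"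
  define v where "v = (n \<bullet> n) *\<^sub>R w - (n \<bullet> w) *\<^sub>R n"
  have nv: "n \<bullet> v = 0"
    by (simp add: v_def inner_diff_right inner_commute)
  have "v \<bullet> v = (n \<bullet> n) * (w \<bullet> v) - (n \<bullet> w) * (n \<bullet> v)"
    by (simp add: v_def inner_diff_left)
  also have "\<dots> = 0" using orth nv by simp
  finally show "(n \<bullet> w) *\<^sub>R n = (n \<bullet> n) *\<^sub>R w" by (simp add: v_def)
qed

lemma has_real_derivative_comp_curve:
  assumes "(f has_derivative (\<lambda>h. n \<bullet> h)) (at (\<gamma> t))"
    and "(\<gamma> has_vector_derivative v) (at t)"
  shows "((f \<circ> \<gamma>) has_real_derivative (n \<bullet> v)) (at t)"
proof -
  have "(\<gamma> has_derivative (\<lambda>h. h *\<^sub>R v)) (at t)"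
    using assms(2) by (simp add: has_vector_derivative_def)
  from diff_chain_at[OF this assms(1)] show ?thesis
    by (simp add: has_field_derivative_def o_def mult_commute_abs)
qed

lemma perturbed_linear_has_zero:
  fixes g :: "real \<Rightarrow> real"
  assumes "continuous_on {-r..r} g" and "0 \<le> r" and "0 < c"
    and "\<And>s. \<bar>s\<bar> \<le> r \<Longrightarrow> \<bar>g s - c * s\<bar> \<le> c * r"
  shows "\<exists>s. \<bar>s\<bar> \<le> r \<and> g s = 0"
proof -
  have "g (-r) \<le> 0" "0 \<le> g r" using assms(2) assms(4)[of "-r"] assms(4)[of r] by auto
  then obtain s where "-r \<le> s" "s \<le> r" "g s = 0"
    using IVT'[of g "-r" 0 r] assms(1,2) by auto
  then show ?thesis by (intro exI[of _ s]) (simp add: abs_le_iff)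
qed

lemma level_set_meets_short_segment:
  fixes f :: "'a::real_inner \<Rightarrow> real"
  assumes cont: "continuous_on UNIV f" and deriv: "(f has_derivative (\<lambda>h. n \<bullet> h)) (at x)"
    and "n \<noteq> 0" and "n \<bullet> v = 0" and "0 < \<epsilon>"
  shows "\<forall>\<^sub>F t in at 0. \<exists>s. \<bar>s\<bar> \<le> \<epsilon> * \<bar>t\<bar> \<and> f (x + t *\<^sub>R v + s *\<^sub>R n) = f x"
proof -
  define c where "c = n \<bullet> n"
  define K where "K = norm v + \<epsilon> * norm n"
  have c: "0 < c" and K: "0 < K"
    using \<open>n \<noteq> 0\<close> \<open>0 < \<epsilon>\<close> by (simp_all add: c_def K_def add_nonneg_pos)
  obtain d where d: "0 < d" and
    lin: "\<And>y. norm (y - x) < d \<Longrightarrow> \<bar>f y - f x - n \<bullet> (y - x)\<bar> \<le> \<epsilon> * c / K * norm (y - x)"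
    using deriv c K \<open>0 < \<epsilon>\<close> unfolding has_derivative_at_alt
    by (metis real_norm_def divide_pos_pos mult_pos_pos)
  have "\<exists>s. \<bar>s\<bar> \<le> \<epsilon> * \<bar>t\<bar> \<and> f (x + t *\<^sub>R v + s *\<^sub>R n) = f x" if t: "\<bar>t\<bar> < d / K" for t
  proof -
    define g where "g s = f (x + t *\<^sub>R v + s *\<^sub>R n) - f x" for s
    have "\<bar>g s - c * s\<bar> \<le> c * (\<epsilon> * \<bar>t\<bar>)" if s: "\<bar>s\<bar> \<le> \<epsilon> * \<bar>t\<bar>" for s
    proof -
      have "norm (t *\<^sub>R v + s *\<^sub>R n) \<le> \<bar>t\<bar> * norm v + \<bar>s\<bar> * norm n"
        by (simp add: norm_triangle_le)
      also have "\<dots> \<le> \<bar>t\<bar> * K"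
        using mult_right_mono[OF s norm_ge_zero[of n]] by (simp add: K_def algebra_simps)
      finally have small: "norm (t *\<^sub>R v + s *\<^sub>R n) \<le> \<bar>t\<bar> * K" .
      moreover have "\<bar>t\<bar> * K < d" using t K by (simp add: pos_less_divide_eq)
      ultimately have "\<bar>g s - n \<bullet> (t *\<^sub>R v + s *\<^sub>R n)\<bar> \<le> \<epsilon> * c / K * norm (t *\<^sub>R v + s *\<^sub>R n)"
        using lin[of "x + t *\<^sub>R v + s *\<^sub>R n"] by (simp add: g_def add.assoc)
      also have "\<dots> \<le> \<epsilon> * c / K * (\<bar>t\<bar> * K)"
        using small c K \<open>0 < \<epsilon>\<close> by (intro mult_left_mono) simp_all
      also have "\<dots> = c * (\<epsilon> * \<bar>t\<bar>)" using K by simp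
      finally show ?thesis
        using \<open>n \<bullet> v = 0\<close> by (simp add: c_def inner_add_right mult.commute)
    qed
    moreover have "continuous_on {-(\<epsilon> * \<bar>t\<bar>)..\<epsilon> * \<bar>t\<bar>} g"
      unfolding g_def by (intro continuous_intros continuous_on_compose2[OF cont]) auto
    ultimately show ?thesis
      using perturbed_linear_has_zero[of "\<epsilon> * \<bar>t\<bar>" g c] c \<open>0 < \<epsilon>\<close> by (simp add: g_def)
  qed
  moreover have "0 < d / K" using d K by simp
  ultimately show ?thesis
    unfolding eventually_at by (metis dist_real_def diff_zero)
qed

lemma has_real_derivative_zero_if_little_o:
  fixes \<sigma> :: "real \<Rightarrow> real"
  assumes "\<sigma> 0 = 0" and "\<And>\<epsilon>. 0 < \<epsilon> \<Longrightarrow> \<forall>\<^sub>F t in at 0. \<bar>\<sigma> t\<bar> \<le> \<epsilon> * \<bar>t\<bar>"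
  shows "(\<sigma> has_real_derivative 0) (at 0)"
  unfolding has_field_derivative_def has_derivative_at_alt
proof (intro conjI allI impI bounded_linear_mult_right)
  fix e :: real assume "0 < e"
  then obtain d where "0 < d" and d: "\<And>t. t \<noteq> 0 \<Longrightarrow> \<bar>t\<bar> < d \<Longrightarrow> \<bar>\<sigma> t\<bar> \<le> e * \<bar>t\<bar>"
    using assms(2)[OF \<open>0 < e\<close>] unfolding eventually_at dist_real_def by auto
  show "\<exists>d>0. \<forall>t. norm (t - 0) < d \<longrightarrow> norm (\<sigma> t - \<sigma> 0 - 0 * (t - 0)) \<le> e * norm (t - 0)"
  proof (intro exI[of _ d] conjI allI impI \<open>0 < d\<close>)
    fix t :: real assume "norm (t - 0) < d"
    then show "norm (\<sigma> t - \<sigma> 0 - 0 * (t - 0)) \<le> e * norm (t - 0)"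
      using d[of t] assms(1) by (cases "t = 0") auto
  qed
qed

lemma level_curve_with_velocity:
  fixes f :: "'a::real_inner \<Rightarrow> real"
  assumes cont: "continuous_on UNIV f" and deriv: "(f has_derivative (\<lambda>h. n \<bullet> h)) (at x)"
    and "n \<noteq> 0" and "n \<bullet> v = 0"
  shows "\<exists>\<gamma>. \<gamma> 0 = x \<and> (\<forall>t. f (\<gamma> t) = f x) \<and> (\<gamma> has_vector_derivative v) (at 0)"
proof -
  define Z where "Z t = cball 0 \<bar>t\<bar> \<inter> {s. f (x + t *\<^sub>R v + s *\<^sub>R n) = f x}" for t
  have "compact (Z t)" for t
    unfolding Z_def
    by (intro compact_Int_closed compact_cball closed_Collect_eq continuous_intros
        continuous_on_compose2[OF cont]) auto
  then have min: "\<exists>s. s \<in> Z t \<and> (\<forall>s'\<in>Z t. \<bar>s\<bar> \<le> \<bar>s'\<bar>)" if "Z t \<noteq> {}" for t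
    using continuous_attains_inf[OF _ that, of abs] continuous_on_rabs[OF continuous_on_id] by auto
  define \<sigma> where
    "\<sigma> t = (if Z t = {} then 0 else SOME s. s \<in> Z t \<and> (\<forall>s'\<in>Z t. \<bar>s\<bar> \<le> \<bar>s'\<bar>))" for t
  have \<sigma>: "\<sigma> t \<in> Z t \<and> (\<forall>s'\<in>Z t. \<bar>\<sigma> t\<bar> \<le> \<bar>s'\<bar>)" if "Z t \<noteq> {}" for t
    using someI_ex[OF min[OF that]] that by (simp add: \<sigma>_def)
  have "\<sigma> 0 = 0"
    using \<sigma>[of 0] by (auto simp: Z_def)
  have small: "\<forall>\<^sub>F t in at 0. Z t \<noteq> {} \<and> \<bar>\<sigma> t\<bar> \<le> \<epsilon> * \<bar>t\<bar>" if "0 < \<epsilon>" for \<epsilon>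
  proof -
    have "0 < min \<epsilon> 1" using that by simp
    from level_set_meets_short_segment[OF cont deriv \<open>n \<noteq> 0\<close> \<open>n \<bullet> v = 0\<close> this]
    show ?thesis
    proof eventually_elim
      case (elim t)
      then obtain s where s: "\<bar>s\<bar> \<le> min \<epsilon> 1 * \<bar>t\<bar>" "f (x + t *\<^sub>R v + s *\<^sub>R n) = f x" by blast
      moreover have "min \<epsilon> 1 * \<bar>t\<bar> \<le> \<bar>t\<bar>" "min \<epsilon> 1 * \<bar>t\<bar> \<le> \<epsilon> * \<bar>t\<bar>"
        using \<open>0 < min \<epsilon> 1\<close> by (simp_all add: mult_left_le_one_le mult_right_mono)
      ultimately have "s \<in> Z t" "\<bar>s\<bar> \<le> \<epsilon> * \<bar>t\<bar>" by (simp_all add: Z_def)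
      then show ?case using \<sigma>[of t] by fastforce
    qed
  qed
  have "(\<sigma> has_real_derivative 0) (at 0)"
    using \<open>\<sigma> 0 = 0\<close> eventually_mono[OF small] by (intro has_real_derivative_zero_if_little_o) auto
  then have line_deriv: "((\<lambda>t. x + t *\<^sub>R v + \<sigma> t *\<^sub>R n) has_vector_derivative v) (at 0)"
    by (auto intro!: derivative_eq_intros simp: has_real_derivative_iff_has_vector_derivative)
  \<comment> \<open>far from \<open>0\<close> the segment may miss the level set; there \<open>\<gamma>\<close> just stays at \<open>x\<close>\<close>
  define \<gamma> where "\<gamma> t = (if Z t = {} then x else x + t *\<^sub>R v + \<sigma> t *\<^sub>R n)" for t
  have "\<forall>\<^sub>F t in at 0. x + t *\<^sub>R v + \<sigma> t *\<^sub>R n = \<gamma> t"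
    using small[of 1] by (auto simp: \<gamma>_def elim: eventually_mono)
  with line_deriv have "(\<gamma> has_vector_derivative v) (at 0)"
    unfolding has_vector_derivative_def
    by (rule has_derivative_transform_eventually) (use \<open>\<sigma> 0 = 0\<close> in \<open>auto simp: \<gamma>_def\<close>)
  moreover have "\<gamma> 0 = x" and "f (\<gamma> t) = f x" for t
    using \<open>\<sigma> 0 = 0\<close> \<sigma>[of t] by (auto simp: \<gamma>_def Z_def)
  ultimately show ?thesis by blast
qed

lemma crit_on_level_iff_orthogonal:
  assumes "continuous_on UNIV H" and "(H has_derivative (\<lambda>h. n \<bullet> h)) (at x)" and "n \<noteq> 0"
    and "(S has_derivative (\<lambda>h. w \<bullet> h)) (at x)"
  shows "crit_on_level S H x \<longleftrightarrow> (\<forall>v. n \<bullet> v = 0 \<longrightarrow> w \<bullet> v = 0)"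
proof
  assume crit: "crit_on_level S H x"
  show "\<forall>v. n \<bullet> v = 0 \<longrightarrow> w \<bullet> v = 0"
  proof (intro allI impI)
    fix v assume "n \<bullet> v = 0"
    then obtain \<gamma> where \<gamma>: "\<gamma> 0 = x" "\<forall>t. H (\<gamma> t) = H x" "(\<gamma> has_vector_derivative v) (at 0)"
      using level_curve_with_velocity[OF assms(1-3)] by blast
    then have "((S \<circ> \<gamma>) has_real_derivative w \<bullet> v) (at 0)"
      using has_real_derivative_comp_curve[of S w \<gamma>] assms(4) by simp
    moreover have "((S \<circ> \<gamma>) has_real_derivative 0) (at 0)"
      using crit \<gamma> unfolding crit_on_level_def by blast
    ultimately show "w \<bullet> v = 0" by (rule DERIV_unique)
  qed
next
  assume orth: "\<forall>v. n \<bullet> v = 0 \<longrightarrow> w \<bullet> v = 0"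
  show "crit_on_level S H x"
    unfolding crit_on_level_def
  proof (intro allI impI, elim conjE)
    fix \<gamma> v assume "\<gamma> 0 = x" and level: "\<forall>t. H (\<gamma> t) = H x"
      and \<gamma>: "(\<gamma> has_vector_derivative v) (at 0)"
    have "((H \<circ> \<gamma>) has_real_derivative n \<bullet> v) (at 0)"
      using has_real_derivative_comp_curve[of H n \<gamma>] assms(2) \<gamma> \<open>\<gamma> 0 = x\<close> by simp
    moreover have "((H \<circ> \<gamma>) has_real_derivative 0) (at 0)"
      using level by (simp add: o_def)
    ultimately have "n \<bullet> v = 0" by (rule DERIV_unique)
    moreover have "((S \<circ> \<gamma>) has_real_derivative w \<bullet> v) (at 0)"
      using has_real_derivative_comp_curve[of S w \<gamma>] assms(4) \<gamma> \<open>\<gamma> 0 = x\<close> by simp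
    ultimately show "((S \<circ> \<gamma>) has_real_derivative 0) (at 0)" using orth by simp
  qed
qed

theorem mainTheorem6:
  fixes P :: "real^3 \<Rightarrow> real^3^3" and H S :: "real^3 \<Rightarrow> real" and x :: "real^3"
  assumes "poisson_tensor P"
    and "smooth H"
    and "smooth S"
    and "\<forall>y. P y *v grad S y = 0"
  shows "(P x *v grad H x + gtensor H x *v grad S x = P x *v grad H x)
         \<longleftrightarrow> (grad H x = 0 \<or> crit_on_level S H x)"
proof -
  define n where "n = grad H x"
  define w where "w = grad S x"
  have "(P x *v grad H x + gtensor H x *v grad S x = P x *v grad H x)
      \<longleftrightarrow> (n \<bullet> w) *\<^sub>R n = (n \<bullet> n) *\<^sub>R w"
    by (simp add: gtensor_mult_vec n_def w_def)
  also have "\<dots> \<longleftrightarrow> n = 0 \<or> crit_on_level S H x"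
  proof (cases "n = 0")
    case False
    have "(H has_derivative (\<lambda>h. n \<bullet> h)) (at x)" "(S has_derivative (\<lambda>h. w \<bullet> h)) (at x)"
      using assms(2,3) by (simp_all add: n_def w_def has_derivative_grad smooth_imp_differentiable)
    with False show ?thesis
      by (simp add: parallel_iff_orthogonal_complement crit_on_level_iff_orthogonal
          smooth_imp_continuous_on[OF assms(2)])
  qed simp
  finally show ?thesis by (simp add: n_def)
qed

end
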